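(* Assume (A1)–(A3), $\alpha>1$, $\mu>0$, $LR_{target}>0$, and $\rho<\ln(10)\,LR_{target}\,\mu$, with $c_{opt},\rho,T_{bc,opt},AUC_{bc,opt}$ as defined below, and let $T_{opt}=\frac{\ln(10)LR_{target}}{k(c_{opt})-r}$, $AUC_{opt}=T_{opt}c_{opt}$, $\tau=\ln(2)/\mu$. Then $$T_{opt}-T_{bc,opt}=\frac{\tau}{\ln 2}\cdot\frac{\rho}{k(c_{opt})-r},\qquad 0<T_{opt}-T_{bc,opt}\le\frac{\tau}{\ln 2}\left(1-\frac{zMIC}{c_{opt}}\right),$$ and $$AUC_{bc,opt}-AUC_{opt}=\frac{\tau}{\ln 2}\left(1-\frac{\rho}{k(c_{opt})-r}\right)c_{opt}\ \ge\ \frac{\tau}{\ln 2}\,zMIC.$$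
   Context: Let $r>0$ and let $k:[0,\infty)\to[0,\infty)$ satisfy: (A1) $k(0)=0$, $k$ is continuous and strictly increasing on $[0,\infty)$, and twice differentiable on $(0,\infty)$; (A2) $\lim_{c\to\infty}k(c)=k_{max}<\infty$; (A3) either (i) (concave case) $k''(c)<0$ for all $c>0$, or (ii) (sigmoidal case) there is $c_{infl}>0$ with $k''(c)>0$ for $0<c<c_{infl}$ and $k''(c)<0$ for $c>c_{infl}$. Set $\alpha=k_{max}/r$; $zMIC$ is the unique $c>0$ with $k(c)=r$; $c_{opt}$ is the unique solution in $(0,\infty)$ of $k'(c)=\frac{k(c)-r}{c}$ (the maximizer of $(k(c)-r)/c$); $\rho=\int_{zMIC}^{c_{opt}}\frac{k(u)-r}{u}du$; $T_{bc,opt}=\frac{\ln(10)LR_{target}-\mu^{-1}\rho}{k(c_{opt})-r}$; $AUC_{bc,opt}=\left[\mu^{-1}+T_{bc,opt}\right]c_{opt}$. *)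

theory Defs
  imports "HOL-Analysis.Analysis"
begin

definition kill_assms :: "(real \<Rightarrow> real) \<Rightarrow> real \<Rightarrow> real \<Rightarrow> bool" where
  "kill_assms k r kmax \<longleftrightarrow>
     r > 0 \<and>
     (\<forall>c\<ge>0. k c \<ge> 0) \<and>
     k 0 = 0 \<and> continuous_on {0..} k \<and> strict_mono_on {0..} k \<and>
     (\<forall>c>0. k differentiable (at c) \<and> deriv k differentiable (at c)) \<and>
     (k \<longlongrightarrow> kmax) at_top \<and>
     ((\<forall>c>0. deriv (deriv k) c < 0) \<or>
      (\<exists>c_infl>0. (\<forall>c. 0 < c \<and> c < c_infl \<longrightarrow> deriv (deriv k) c > 0) \<and>
                  (\<forall>c>c_infl. deriv (deriv k) c < 0)))"

definition zMIC :: "(real \<Rightarrow> real) \<Rightarrow> real \<Rightarrow> real" where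
  "zMIC k r = (THE c. c > 0 \<and> k c = r)"

definition c_opt :: "(real \<Rightarrow> real) \<Rightarrow> real \<Rightarrow> real" where
  "c_opt k r = (THE c. c > 0 \<and> deriv k c = (k c - r) / c)"

definition rho :: "(real \<Rightarrow> real) \<Rightarrow> real \<Rightarrow> real" where
  "rho k r = integral {zMIC k r..c_opt k r} (\<lambda>u. (k u - r) / u)"

definition T_bc_opt :: "(real \<Rightarrow> real) \<Rightarrow> real \<Rightarrow> real \<Rightarrow> real \<Rightarrow> real" where
  "T_bc_opt k r \<mu> LR = (ln 10 * LR - rho k r / \<mu>) / (k (c_opt k r) - r)"

definition AUC_bc_opt :: "(real \<Rightarrow> real) \<Rightarrow> real \<Rightarrow> real \<Rightarrow> real \<Rightarrow> real" where
  "AUC_bc_opt k r \<mu> LR = (1 / \<mu> + T_bc_opt k r \<mu> LR) * c_opt k r"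

definition T_opt :: "(real \<Rightarrow> real) \<Rightarrow> real \<Rightarrow> real \<Rightarrow> real" where
  "T_opt k r LR = ln 10 * LR / (k (c_opt k r) - r)"

definition AUC_opt :: "(real \<Rightarrow> real) \<Rightarrow> real \<Rightarrow> real \<Rightarrow> real" where
  "AUC_opt k r LR = T_opt k r LR * c_opt k r"

end

theory Submission
  imports Defs
begin

text \<open>With \<open>g(c) = (k(c) - r)/c\<close> and \<open>h(c) = c k'(c) - (k(c) - r)\<close> one has \<open>g' = h/c\<^sup>2\<close> and
  \<open>h' = c k''\<close>. The sign pattern of \<open>k''\<close> makes \<open>h\<close> strictly quasiconcave on \<open>(0,\<infinity>)\<close>; as
  \<open>h > 0\<close> on \<open>(0, zMIC]\<close> and \<open>g \<rightarrow> 0\<close>, \<open>h\<close> has exactly one zero \<open>c_opt > zMIC\<close> and is positive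
  before it. So \<open>g\<close> increases on \<open>[zMIC, c_opt]\<close> from \<open>0\<close> to \<open>(k(c_opt) - r)/c_opt\<close>, whence
  \<open>0 < \<rho> \<le> (c_opt - zMIC)(k(c_opt) - r)/c_opt\<close>; the claimed identities are algebra, and the
  bounds are exactly these two estimates on \<open>\<rho>\<close>.\<close>

text \<open>The sign pattern of \<open>k''\<close> in (A3); \<open>ci = 0\<close> is the concave case.\<close>

definition pos_then_neg :: "(real \<Rightarrow> real) \<Rightarrow> bool" where
  "pos_then_neg f \<longleftrightarrow>
     (\<exists>ci\<ge>0. (\<forall>x. 0 < x \<and> x < ci \<longrightarrow> f x > 0) \<and> (\<forall>x>ci. f x < 0))"

lemma pos_then_neg_mult_pos:
  assumes "pos_then_neg f" and "\<And>x. x > 0 \<Longrightarrow> w x > 0"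
  shows "pos_then_neg (\<lambda>x. w x * f x)"
proof -
  obtain ci where "ci \<ge> 0" "\<And>x. 0 < x \<Longrightarrow> x < ci \<Longrightarrow> f x > 0" "\<And>x. x > ci \<Longrightarrow> f x < 0"
    using assms(1) unfolding pos_then_neg_def by blast
  with assms(2) show ?thesis
    unfolding pos_then_neg_def by (intro exI[of _ ci]) (auto intro: mult_pos_neg)
qed

lemma quasiconcave_if_deriv_pos_then_neg:
  fixes F f :: "real \<Rightarrow> real"
  assumes f: "pos_then_neg f"
    and F: "\<And>x. x > 0 \<Longrightarrow> (F has_real_derivative f x) (at x)"
    and x: "0 < x" "x < a" and b: "a < b"
  shows "min (F x) (F b) < F a"
proof -
  obtain ci where ci: "ci \<ge> 0" "\<And>x. 0 < x \<Longrightarrow> x < ci \<Longrightarrow> f x > 0" "\<And>x. x > ci \<Longrightarrow> f x < 0"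
    using f unfolding pos_then_neg_def by blast
  show ?thesis
  proof (cases "a \<le> ci")
    case True
    have cont: "continuous_on {x..a} F"
      using x by (intro continuous_at_imp_continuous_on ballI DERIV_isCont[OF F]) auto
    have "F x < F a"
    proof (rule DERIV_pos_imp_increasing_open[OF x(2) _ cont])
      fix y assume "x < y" "y < a"
      with x True show "\<exists>d. (F has_real_derivative d) (at y) \<and> d > 0"
        using F[of y] ci(2)[of y] by auto
    qed
    then show ?thesis by linarith
  next
    case False
    have "F b < F a"
    proof (rule DERIV_neg_imp_decreasing[OF b])
      fix y assume "a \<le> y" "y \<le> b"
      with False ci(1) show "\<exists>d. (F has_real_derivative d) (at y) \<and> d < 0"
        using F[of y] ci(3)[of y] by auto
    qed
    then show ?thesis by linarith
  qed
qed

lemma integral_bounds_if_mono_on: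
  fixes g :: "real \<Rightarrow> real"
  assumes "a < b" and cont: "continuous_on {a..b} g" and mono: "mono_on {a..b} g"
    and "0 \<le> g a" and pos: "\<And>x. a < x \<Longrightarrow> x \<le> b \<Longrightarrow> 0 < g x"
  shows "0 < integral {a..b} g" and "integral {a..b} g \<le> (b - a) * g b"
proof -
  have int: "g integrable_on {u..v}" if "a \<le> u" "v \<le> b" for u v
    using that by (intro integrable_continuous_interval continuous_on_subset[OF cont]) auto
  have nonneg: "0 \<le> g x" if "a \<le> x" "x \<le> b" for x
    using that \<open>0 \<le> g a\<close> pos[of x] by (cases "x = a") auto
  define m where "m = (a + b) / 2"
  have m: "a < m" "m < b" using \<open>a < b\<close> by (auto simp: m_def)
  have "integral {a..m} g + integral {m..b} g = integral {a..b} g"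
    using m int[of a b] by (intro Henstock_Kurzweil_Integration.integral_combine) auto
  moreover have "0 \<le> integral {a..m} g"
    using m int nonneg by (intro integral_nonneg) auto
  moreover have "(b - m) * g m \<le> integral {m..b} g"
    using integral_le[of "\<lambda>_. g m" "{m..b}" g] m int mono_onD[OF mono, of m] by auto
  moreover have "0 < (b - m) * g m" using m pos[of m] by simp
  ultimately show "0 < integral {a..b} g" by linarith
  have "integral {a..b} g \<le> integral {a..b} (\<lambda>_. g b)"
    using int[of a b] mono_onD[OF mono, of _ b] \<open>a < b\<close> by (intro integral_le) auto
  then show "integral {a..b} g \<le> (b - a) * g b" using \<open>a < b\<close> by simp
qed

definition rate_per_conc :: "(real \<Rightarrow> real) \<Rightarrow> real \<Rightarrow> real \<Rightarrow> real" where
  "rate_per_conc k r c = (k c - r) / c"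

text \<open>\<open>c_opt\<close> is where the line through \<open>(0, r)\<close> touches the graph of \<open>k\<close>, i.e. the zero of:\<close>

definition tangency_gap :: "(real \<Rightarrow> real) \<Rightarrow> real \<Rightarrow> real \<Rightarrow> real" where
  "tangency_gap k r c = c * deriv k c - (k c - r)"

locale kill_rate =
  fixes k :: "real \<Rightarrow> real" and r kmax :: real
  assumes kill_assms: "kill_assms k r kmax" and r_less_kmax: "r < kmax"
begin

lemma r_pos: "r > 0" and k_zero: "k 0 = 0" and k_cont: "continuous_on {0..} k"
  and k_strict_mono: "strict_mono_on {0..} k" and k_lim: "(k \<longlongrightarrow> kmax) at_top"
  using kill_assms unfolding kill_assms_def by blast+

lemma has_deriv_k: "x > 0 \<Longrightarrow> (k has_real_derivative deriv k x) (at x)"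
  and has_deriv_deriv_k: "x > 0 \<Longrightarrow> (deriv k has_real_derivative deriv (deriv k) x) (at x)"
  using kill_assms DERIV_deriv_iff_real_differentiable unfolding kill_assms_def by blast+

lemma pos_then_neg_deriv2: "pos_then_neg (deriv (deriv k))"
proof -
  have "(\<forall>x>0. deriv (deriv k) x < 0) \<or>
      (\<exists>ci>0. (\<forall>x. 0 < x \<and> x < ci \<longrightarrow> deriv (deriv k) x > 0) \<and> (\<forall>x>ci. deriv (deriv k) x < 0))"
    using kill_assms unfolding kill_assms_def by blast
  then show ?thesis
    unfolding pos_then_neg_def by (metis order.refl order.strict_iff_not)
qed

lemma deriv_k_pos:
  assumes "x > 0" shows "deriv k x > 0"
proof -
  have nonneg: "deriv k y \<ge> 0" if "y > 0" for y
    using that has_deriv_k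
    by (intro mono_on_imp_deriv_nonneg[OF strict_mono_on_imp_mono_on[OF k_strict_mono]]) auto
  have "min (deriv k (x/2)) (deriv k (x+1)) < deriv k x"
    using assms by (intro quasiconcave_if_deriv_pos_then_neg[OF pos_then_neg_deriv2 has_deriv_deriv_k]) auto
  with nonneg[of "x/2"] nonneg[of "x+1"] assms show ?thesis by linarith
qed

lemma zMIC_spec:
  "0 < zMIC k r" "k (zMIC k r) = r"
  "\<And>x. 0 \<le> x \<Longrightarrow> x < zMIC k r \<Longrightarrow> k x < r"
  "\<And>x. zMIC k r < x \<Longrightarrow> r < k x"
proof -
  obtain M where M: "M \<ge> 0" "k M > r"
  proof -
    obtain N where "\<forall>x\<ge>N. k x > r"
      using order_tendstoD(1)[OF k_lim r_less_kmax] by (auto simp: eventually_at_top_linorder)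
    then show ?thesis using that[of "max N 0"] by auto
  qed
  obtain z where z: "0 \<le> z" "k z = r"
    using IVT'[of k 0 r M] M k_zero r_pos continuous_on_subset[OF k_cont, of "{0..M}"] by force
  have z_pos: "z > 0" using z k_zero r_pos by (cases "z = 0") auto
  have below: "k x < r" if "0 \<le> x" "x < z" for x
    using strict_mono_onD[OF k_strict_mono, of x z] z that by simp
  have above: "r < k x" if "z < x" for x
    using strict_mono_onD[OF k_strict_mono, of z x] z that by simp
  have "zMIC k r = z"
    unfolding zMIC_def
  proof (rule the_equality)
    fix y assume "0 < y \<and> k y = r"
    then show "y = z" using below[of y] above[of y] by (cases y z rule: linorder_cases) auto
  qed (use z_pos z in auto)
  with z_pos z below above show
    "0 < zMIC k r" "k (zMIC k r) = r"
    "\<And>x. 0 \<le> x \<Longrightarrow> x < zMIC k r \<Longrightarrow> k x < r"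
    "\<And>x. zMIC k r < x \<Longrightarrow> r < k x" by auto
qed

lemma has_deriv_rate_per_conc:
  assumes "x > 0"
  shows "(rate_per_conc k r has_real_derivative tangency_gap k r x / x\<^sup>2) (at x)"
proof -
  have "((\<lambda>c. (k c - r) / c) has_real_derivative
          ((deriv k x - 0) * x - (k x - r) * 1) / (x * x)) (at x)"
    using assms by (intro derivative_intros has_deriv_k) auto
  then show ?thesis
    unfolding rate_per_conc_def[abs_def]
    by (simp add: tangency_gap_def power2_eq_square algebra_simps)
qed

lemma has_deriv_tangency_gap:
  assumes "x > 0"
  shows "(tangency_gap k r has_real_derivative x * deriv (deriv k) x) (at x)"
proof -
  have "((\<lambda>c. c * deriv k c - (k c - r)) has_real_derivative
          (x * deriv (deriv k) x + 1 * deriv k x) - (deriv k x - 0)) (at x)"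
    using assms
    by (intro derivative_intros DERIV_mult'[OF DERIV_ident has_deriv_deriv_k] has_deriv_k)
  then show ?thesis unfolding tangency_gap_def[abs_def] by simp
qed

lemma quasiconcave_tangency_gap:
  "0 < x \<Longrightarrow> x < a \<Longrightarrow> a < b \<Longrightarrow>
     min (tangency_gap k r x) (tangency_gap k r b) < tangency_gap k r a"
  by (rule quasiconcave_if_deriv_pos_then_neg[OF
        pos_then_neg_mult_pos[OF pos_then_neg_deriv2] has_deriv_tangency_gap]) auto

lemma tangency_gap_pos_upto_zMIC:
  assumes "0 < x" "x \<le> zMIC k r"
  shows "tangency_gap k r x > 0"
proof -
  have "k x \<le> r" using zMIC_spec assms by (cases "x = zMIC k r") (auto intro: less_imp_le)
  then show ?thesis
    using mult_pos_pos[OF assms(1) deriv_k_pos[OF assms(1)]] unfolding tangency_gap_def by linarith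
qed

lemma tangency_gap_pos_before_nonneg:
  assumes "0 < a" "a < b" "tangency_gap k r b \<ge> 0"
  shows "tangency_gap k r a > 0"
proof -
  define x where "x = min a (zMIC k r) / 2"
  have x: "0 < x" "x < a" "x \<le> zMIC k r" using assms zMIC_spec(1) by (auto simp: x_def)
  show ?thesis
    using quasiconcave_tangency_gap[OF x(1,2) assms(2)] tangency_gap_pos_upto_zMIC[OF x(1,3)] assms(3)
    by linarith
qed

lemma rate_per_conc_tendsto_0: "(rate_per_conc k r \<longlongrightarrow> 0) at_top"
proof -
  have "((\<lambda>c. (k c - r) * inverse c) \<longlongrightarrow> (kmax - r) * 0) at_top"
    by (intro tendsto_mult tendsto_diff k_lim tendsto_const tendsto_inverse_0_at_top filterlim_ident)
  then show ?thesis by (simp add: rate_per_conc_def[abs_def] divide_inverse)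
qed

text \<open>Otherwise the gap, positive at \<open>zMIC\<close>, would be positive throughout, so \<open>rate_per_conc\<close>
  would increase beyond \<open>zMIC\<close>, where it is positive, contradicting its limit \<open>0\<close>.\<close>

lemma tangency_gap_has_root: "\<exists>c>0. tangency_gap k r c = 0"
proof (rule ccontr)
  assume no_root: "\<not> (\<exists>c>0. tangency_gap k r c = 0)"
  define z where "z = zMIC k r"
  have gap_pos: "tangency_gap k r x > 0" if "x > 0" for x
  proof (rule ccontr)
    assume "\<not> tangency_gap k r x > 0"
    with no_root that have neg: "tangency_gap k r x < 0" by force
    with tangency_gap_pos_upto_zMIC[of x] that have "z < x" unfolding z_def by force
    moreover have "continuous_on {z..x} (tangency_gap k r)"
      using zMIC_spec(1)
      by (intro continuous_at_imp_continuous_on ballI DERIV_isCont[OF has_deriv_tangency_gap])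
         (auto simp: z_def)
    ultimately obtain y where "z \<le> y" "y \<le> x" "tangency_gap k r y = 0"
      using IVT2'[of "tangency_gap k r" x 0 z] neg tangency_gap_pos_upto_zMIC[of z] zMIC_spec(1)
      by (force simp: z_def)
    with no_root zMIC_spec(1) show False by (force simp: z_def)
  qed
  have rate_pos: "rate_per_conc k r (z + 1) > 0"
    using zMIC_spec(1) zMIC_spec(4)[of "z + 1"] by (simp add: z_def rate_per_conc_def)
  obtain N where N: "\<And>x. x \<ge> N \<Longrightarrow> rate_per_conc k r x < rate_per_conc k r (z + 1)"
    using order_tendstoD(2)[OF rate_per_conc_tendsto_0 rate_pos]
    by (auto simp: eventually_at_top_linorder)
  have der: "\<exists>y. (rate_per_conc k r has_real_derivative y) (at x) \<and> y > 0" if "z + 1 \<le> x" for x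
  proof -
    have "x > 0" using that zMIC_spec(1) by (simp add: z_def)
    then show ?thesis using has_deriv_rate_per_conc gap_pos by force
  qed
  have "rate_per_conc k r (z + 1) < rate_per_conc k r (max N (z + 2))"
    by (rule DERIV_pos_imp_increasing) (simp_all add: der)
  with N[of "max N (z + 2)"] show False by simp
qed

lemma c_opt_spec:
  "0 < c_opt k r" "tangency_gap k r (c_opt k r) = 0" "zMIC k r < c_opt k r"
  "\<And>x. 0 < x \<Longrightarrow> x < c_opt k r \<Longrightarrow> tangency_gap k r x > 0"
proof -
  obtain c where c: "c > 0" "tangency_gap k r c = 0" using tangency_gap_has_root by blast
  have root_iff: "deriv k y = (k y - r) / y \<longleftrightarrow> tangency_gap k r y = 0" if "y > 0" for y
    using that by (auto simp: tangency_gap_def field_simps)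
  have "c_opt k r = c"
    unfolding c_opt_def
  proof (rule the_equality)
    fix y assume y: "0 < y \<and> deriv k y = (k y - r) / y"
    then have "tangency_gap k r y = 0" using root_iff by blast
    then show "y = c"
      using tangency_gap_pos_before_nonneg[of y c] tangency_gap_pos_before_nonneg[of c y] c y
      by (cases y c rule: linorder_cases) auto
  qed (use c root_iff in auto)
  moreover have "zMIC k r < c"
  proof (rule ccontr)
    assume "\<not> zMIC k r < c"
    then have "tangency_gap k r c > 0" using tangency_gap_pos_upto_zMIC c(1) by simp
    with c(2) show False by simp
  qed
  moreover have "tangency_gap k r x > 0" if "0 < x" "x < c" for x
    using tangency_gap_pos_before_nonneg[OF that] c(2) by simp
  ultimately show
    "0 < c_opt k r" "tangency_gap k r (c_opt k r) = 0" "zMIC k r < c_opt k r"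
    "\<And>x. 0 < x \<Longrightarrow> x < c_opt k r \<Longrightarrow> tangency_gap k r x > 0"
    using c by simp_all
qed

lemma rate_per_conc_mono_on: "mono_on {0<..c_opt k r} (rate_per_conc k r)"
proof (rule mono_onI)
  fix u v assume u: "u \<in> {0<..c_opt k r}" and v: "v \<in> {0<..c_opt k r}" and "u \<le> v"
  have der: "\<exists>y. (rate_per_conc k r has_real_derivative y) (at x) \<and> y \<ge> 0"
    if "u \<le> x" "x \<le> v" for x
  proof -
    have x: "0 < x" "x \<le> c_opt k r" using u v that by auto
    then have "tangency_gap k r x \<ge> 0"
      using c_opt_spec(2) c_opt_spec(4)[of x] by (cases "x = c_opt k r") simp_all
    then show ?thesis using has_deriv_rate_per_conc[OF x(1)] by force
  qed
  show "rate_per_conc k r u \<le> rate_per_conc k r v"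
    by (rule DERIV_nonneg_imp_nondecreasing[OF \<open>u \<le> v\<close> der])
qed

lemma rho_bounds:
  "0 < rho k r"
  "rho k r \<le> (c_opt k r - zMIC k r) * rate_per_conc k r (c_opt k r)"
proof -
  define z c where "z = zMIC k r" and "c = c_opt k r"
  have zc: "0 < z" "z < c" using zMIC_spec(1) c_opt_spec(3) by (auto simp: z_def c_def)
  have rho_eq: "rho k r = integral {z..c} (rate_per_conc k r)"
    by (simp add: rho_def rate_per_conc_def[abs_def] z_def c_def)
  have cont: "continuous_on {z..c} (rate_per_conc k r)"
    using zc by (intro continuous_at_imp_continuous_on ballI DERIV_isCont[OF has_deriv_rate_per_conc]) auto
  have mono: "mono_on {z..c} (rate_per_conc k r)"
    using zc by (intro mono_on_subset[OF rate_per_conc_mono_on]) (auto simp: c_def)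
  have at_z: "0 \<le> rate_per_conc k r z"
    using zMIC_spec(2) by (simp add: rate_per_conc_def z_def)
  have pos: "0 < rate_per_conc k r x" if "z < x" "x \<le> c" for x
    using zMIC_spec(4)[of x] zc that by (simp add: rate_per_conc_def z_def)
  show "0 < rho k r" "rho k r \<le> (c_opt k r - zMIC k r) * rate_per_conc k r (c_opt k r)"
    using integral_bounds_if_mono_on[OF zc(2) cont mono at_z pos]
    unfolding rho_eq by (simp_all add: z_def c_def)
qed

end

theorem mainTheorem9:
  fixes k :: "real \<Rightarrow> real" and r kmax \<mu> LR :: real
  assumes "kill_assms k r kmax"
    and "kmax / r > 1"
    and "\<mu> > 0" and "LR > 0"
    and "rho k r < ln 10 * LR * \<mu>"
  shows "let \<tau> = ln 2 / \<mu>;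
             Topt = T_opt k r LR; Tbc = T_bc_opt k r \<mu> LR;
             c = c_opt k r; \<kappa> = k (c_opt k r) - r in
           Topt - Tbc = \<tau> / ln 2 * (rho k r / \<kappa>) \<and>
           0 < Topt - Tbc \<and> Topt - Tbc \<le> \<tau> / ln 2 * (1 - zMIC k r / c) \<and>
           AUC_bc_opt k r \<mu> LR - AUC_opt k r LR = \<tau> / ln 2 * (1 - rho k r / \<kappa>) * c \<and>
           \<tau> / ln 2 * (1 - rho k r / \<kappa>) * c \<ge> \<tau> / ln 2 * zMIC k r"
proof -
  \<comment> \<open>\<open>LR > 0\<close> and the bound on \<open>rho k r\<close> only make \<open>T_bc_opt\<close> positive.\<close>
  interpret kill_rate k r kmax
  proof
    show "r < kmax"
      using assms(1,2) by (auto simp: kill_assms_def field_simps)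
  qed (fact assms(1))
  define \<kappa> where "\<kappa> = k (c_opt k r) - r"
  have c: "0 < c_opt k r" using c_opt_spec(1) .
  have \<kappa>: "0 < \<kappa>" using zMIC_spec(4) c_opt_spec(3) by (simp add: \<kappa>_def)
  have \<rho>: "0 < rho k r" "rho k r / \<kappa> \<le> 1 - zMIC k r / c_opt k r"
    using rho_bounds c \<kappa> by (simp_all add: rate_per_conc_def \<kappa>_def field_simps)
  have \<tau>: "ln 2 / \<mu> / ln 2 = 1 / \<mu>" by simp
  have T_gap: "T_opt k r LR - T_bc_opt k r \<mu> LR = 1 / \<mu> * (rho k r / \<kappa>)"
    using assms(3) \<kappa> unfolding T_opt_def T_bc_opt_def \<kappa>_def[symmetric]
    by (simp add: field_simps)
  have AUC_gap: "AUC_bc_opt k r \<mu> LR - AUC_opt k r LR = 1 / \<mu> * (1 - rho k r / \<kappa>) * c_opt k r"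
    using assms(3) \<kappa>
    unfolding AUC_bc_opt_def AUC_opt_def T_opt_def T_bc_opt_def \<kappa>_def[symmetric]
    by (simp add: field_simps)
  have "zMIC k r \<le> (1 - rho k r / \<kappa>) * c_opt k r"
    using \<rho>(2) c by (simp add: field_simps)
  then show ?thesis
    unfolding Let_def \<tau> T_gap AUC_gap \<kappa>_def[symmetric]
    using assms(3) \<rho> \<kappa> mult_left_mono[OF \<rho>(2), of "1 / \<mu>"]
      mult_left_mono[of "zMIC k r" _ "1 / \<mu>"]
    by (simp add: mult.assoc)
qed

end
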